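(* Let $\Theta=(\theta_k)_{k\ge1}$ be a sequence of positive real numbers such that $g(z)=\sum_{k\ge1}\frac{\theta_k}{k}z^k$ has radius of convergence $r\in(0,\infty)$. Let $(Y_\ell)_{\ell\ge1}$ be independent Poisson random variables, $Y_\ell$ with parameter $\frac{r^\ell\theta_\ell}{\ell}$, let $X_k=\sum_{\ell\mid k}\ell Y_\ell$ and $f(z)=\sum_{k\ge1}\frac{X_k}{k}z^k$. Then for all $z,w\in\mathbb{D}=\{z\in\mathbb{C}:|z|<1\}$, $$\mathrm{Cov}(f(z),f(w))=\sum_{a,b\ge1}\frac{1}{ab}\,g(r z^a\overline{w}^b).$$
   Context: For complex random variables $U,V$, $\mathrm{Cov}(U,V)=\mathbb{E}\big[(U-\mathbb{E}U)\overline{(V-\mathbb{E}V)}\big]$. *)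

theory Defs
  imports "HOL-Analysis.Analysis" "HOL-Probability.Probability"
begin

definition ccov :: "'a measure \<Rightarrow> ('a \<Rightarrow> complex) \<Rightarrow> ('a \<Rightarrow> complex) \<Rightarrow> complex" where
  "ccov M U V = (LINT x|M. (U x - (LINT y|M. U y)) * cnj (V x - (LINT y|M. V y)))"

text \<open>The generating function g(z) = sum_{k>=1} theta_k / k z^k (the k = 0 term vanishes).\<close>
definition gfun :: "(nat \<Rightarrow> real) \<Rightarrow> complex \<Rightarrow> complex" where
  "gfun \<theta> z = (\<Sum>k. complex_of_real (\<theta> k / real k) * z ^ k)"

definition Xvar :: "(nat \<Rightarrow> 'a \<Rightarrow> nat) \<Rightarrow> nat \<Rightarrow> 'a \<Rightarrow> nat" where
  "Xvar Y k x = (\<Sum>l\<in>{l\<in>{1..k}. l dvd k}. l * Y l x)"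

definition fvar :: "(nat \<Rightarrow> 'a \<Rightarrow> nat) \<Rightarrow> complex \<Rightarrow> 'a \<Rightarrow> complex" where
  "fvar Y z x = (\<Sum>k. of_real (real (Xvar Y k x) / real k) * z ^ k)"

end

theory Submission
  imports Defs
begin

(* Write c_l(z) = -log (1 - z^l) = sum_{m>=1} z^(l m) / m. Grouping the terms of f(z) by the
   divisors l of k shows f(z) = sum_l Y_l c_l(z) almost surely. The Y_l are independent Poisson
   variables with mean and variance lambda_l = r^l theta_l / l, so the centred summands are
   uncorrelated and Cov(f(z), f(w)) = sum_l lambda_l c_l(z) cnj (c_l(w)). Expanding both
   logarithms and summing over l first turns this into the double series, because
   sum_l lambda_l u^l = g(r u). Every interchange of summations and expectations is justified by
   absolute convergence, which rests on sum_l lambda_l rho^l < oo for rho < 1, i.e. on r being the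
   radius of convergence of g. *)

lemma has_sum_from_1_iff_UNIV:
  fixes f :: "nat \<Rightarrow> 'a :: topological_comm_monoid_add"
  assumes "f 0 = 0"
  shows "(f has_sum S) {1..} \<longleftrightarrow> (f has_sum S) UNIV"
  using assms by (intro has_sum_cong_neutral) (auto simp: not_le)

lemma has_sum_from_1_imp_sums:
  fixes f :: "nat \<Rightarrow> 'a :: {topological_comm_monoid_add, t2_space}"
  assumes "(f has_sum S) {1..}" "f 0 = 0"
  shows "f sums S"
  using assms by (metis has_sum_from_1_iff_UNIV has_sum_imp_sums)

lemma summable_on_comparison_nat:
  fixes f g :: "nat \<Rightarrow> real"
  assumes "summable f" "\<And>n. 0 \<le> f n" "\<And>n. n \<in> A \<Longrightarrow> 0 \<le> g n" "\<And>n. n \<in> A \<Longrightarrow> g n \<le> f n"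
  shows "g summable_on A"
proof (rule summable_on_comparison_test)
  show "f summable_on A"
    using summable_nonneg_imp_summable_on[OF assms(1,2)] by (rule summable_on_subset_banach) simp
qed (use assms in auto)

lemma has_sum_product:
  fixes f g :: "_ \<Rightarrow> 'a :: {real_normed_div_algebra, banach}"
  assumes "(f has_sum F) A" "(g has_sum G) B"
    and "(\<lambda>x. norm (f x)) summable_on A" "(\<lambda>y. norm (g y)) summable_on B"
  shows "((\<lambda>(x, y). f x * g y) has_sum F * G) (A \<times> B)"
proof (rule has_sum_SigmaI[where g = "\<lambda>x. f x * G"])
  show "((\<lambda>y. (\<lambda>(x, y). f x * g y) (x, y)) has_sum f x * G) B" for x
    using has_sum_cmult_right[OF assms(2)] by simp
  show "((\<lambda>x. f x * G) has_sum F * G) A"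
    by (rule has_sum_cmult_left[OF assms(1)])
  have inner: "((\<lambda>y. norm (f x) * norm (g y)) has_sum norm (f x) * infsum (\<lambda>y. norm (g y)) B) B"
    for x
    using assms(4) by (intro has_sum_cmult_right) (simp add: has_sum_iff)
  have "(\<lambda>p. norm (f (fst p)) * norm (g (snd p))) summable_on Sigma A (\<lambda>_. B)"
    by (rule summable_on_SigmaI[where g = "\<lambda>x. norm (f x) * infsum (\<lambda>y. norm (g y)) B"])
       (use inner summable_on_cmult_left[OF assms(3)] in auto)
  then have "(\<lambda>p. norm ((\<lambda>(x, y). f x * g y) p)) summable_on A \<times> B"
    by (simp add: case_prod_unfold norm_mult)
  then show "(\<lambda>(x, y). f x * g y) summable_on A \<times> B"
    by (rule abs_summable_summable)
qed

lemma conv_radius_of_real: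
  "conv_radius (\<lambda>k. of_real (f k) :: 'a :: {real_normed_div_algebra, banach}) = conv_radius f"
  by (simp add: conv_radius_def)

lemma expectation_pmf_nat_sums:
  fixes p :: "nat pmf" and h :: "nat \<Rightarrow> real"
  assumes sums: "(\<lambda>k. pmf p k * h k) sums s" and nonneg: "\<And>k. 0 \<le> h k"
  shows "integrable (measure_pmf p) h" and "measure_pmf.expectation p h = s"
proof -
  have "summable (\<lambda>k. norm (pmf p k *\<^sub>R h k))"
    using sums nonneg by (simp add: sums_iff abs_mult)
  then have int: "integrable (count_space UNIV) (\<lambda>k. pmf p k *\<^sub>R h k)"
    by (simp add: integrable_count_space_nat_iff)
  then show "integrable (measure_pmf p) h"
    unfolding measure_pmf_eq_density by (subst integrable_density) auto
  have "measure_pmf.expectation p h = (\<integral>k. pmf p k *\<^sub>R h k \<partial>count_space UNIV)"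
    unfolding measure_pmf_eq_density by (subst integral_density) auto
  also have "\<dots> = (\<Sum>k. pmf p k *\<^sub>R h k)"
    by (rule integral_count_space_nat[OF int])
  finally show "measure_pmf.expectation p h = s"
    using sums by (simp add: sums_iff)
qed

lemma poisson_moment_sums:
  fixes a :: real
  shows "(\<lambda>k. a ^ k / fact k * exp (-a)) sums 1"
    and "(\<lambda>k. a ^ k / fact k * exp (-a) * real k) sums a"
    and "(\<lambda>k. a ^ k / fact k * exp (-a) * real k ^ 2) sums (a ^ 2 + a)"
proof -
  have "(\<lambda>k. a ^ k / fact k) sums exp a"
    using exp_converges[of a] by (simp add: divide_inverse mult.commute)
  from sums_mult2[OF this, of "exp (-a)"]
  show p0: "(\<lambda>k. a ^ k / fact k * exp (-a)) sums 1"
    by (simp add: exp_minus field_simps)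
  have shift: "a ^ Suc k / fact (Suc k) * real (Suc k) = a * (a ^ k / fact k)" for k
    by (simp add: fact_Suc field_simps del: of_nat_Suc)
  have "(\<lambda>k. a * (a ^ k / fact k * exp (-a))) sums a"
    using sums_mult[OF p0, of a] by simp
  then have "(\<lambda>k. a ^ Suc k / fact (Suc k) * exp (-a) * real (Suc k)) sums a"
    by (simp add: shift mult_ac)
  then show p1: "(\<lambda>k. a ^ k / fact k * exp (-a) * real k) sums a"
    by (subst (asm) sums_Suc_iff) simp
  have "a ^ Suc k / fact (Suc k) * exp (-a) * real (Suc k) ^ 2
        = a * (a ^ k / fact k * exp (-a) * real k + a ^ k / fact k * exp (-a))" for k
  proof -
    have "a ^ Suc k / fact (Suc k) * exp (-a) * real (Suc k) ^ 2
        = (a ^ Suc k / fact (Suc k) * real (Suc k)) * exp (-a) * real (Suc k)"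
      by (simp add: power2_eq_square)
    also have "\<dots> = a * (a ^ k / fact k * exp (-a) * real k + a ^ k / fact k * exp (-a))"
      unfolding shift by (simp add: algebra_simps add_divide_distrib)
    finally show ?thesis .
  qed
  moreover have "(\<lambda>k. a * (a ^ k / fact k * exp (-a) * real k + a ^ k / fact k * exp (-a)))
      sums (a ^ 2 + a)"
    using sums_mult[OF sums_add[OF p1 p0], of a]
    by (simp add: power2_eq_square algebra_simps add_divide_distrib)
  ultimately have "(\<lambda>k. a ^ Suc k / fact (Suc k) * exp (-a) * real (Suc k) ^ 2) sums (a ^ 2 + a)"
    by simp
  then show "(\<lambda>k. a ^ k / fact k * exp (-a) * real k ^ 2) sums (a ^ 2 + a)"
    by (subst (asm) sums_Suc_iff) simp
qed

lemma
  fixes a :: real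
  assumes "0 < a"
  shows integrable_poisson_pmf: "integrable (measure_pmf (poisson_pmf a)) real"
    and expectation_poisson_pmf: "measure_pmf.expectation (poisson_pmf a) real = a"
    and integrable_poisson_pmf_square: "integrable (measure_pmf (poisson_pmf a)) (\<lambda>k. real k ^ 2)"
    and expectation_poisson_pmf_square:
      "measure_pmf.expectation (poisson_pmf a) (\<lambda>k. real k ^ 2) = a ^ 2 + a"
  using expectation_pmf_nat_sums[of "poisson_pmf a" real a]
    expectation_pmf_nat_sums[of "poisson_pmf a" "\<lambda>k. real k ^ 2" "a ^ 2 + a"]
    poisson_moment_sums[of a] assms by auto

lemma has_sum_minus_Ln_one_minus:
  fixes u :: complex
  assumes "norm u < 1"
  shows "((\<lambda>m. u ^ m / of_nat m) has_sum - Ln (1 - u)) {1..}"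
proof -
  have "(\<lambda>m. u ^ m / of_nat m) sums - Ln (1 - u)"
    using sums_minus[OF Ln_series'[of "- u"]] assms by simp
  moreover have "summable (\<lambda>m. norm (u ^ m / of_nat m))"
  proof (rule summable_comparison_test')
    show "summable (\<lambda>m. norm u ^ m)" using assms by (simp add: summable_geometric)
    show "norm (norm (u ^ m / of_nat m)) \<le> norm u ^ m" for m
      using mult_left_mono[of 1 "real m" "norm u ^ m"]
      by (cases "m = 0") (simp_all add: norm_divide norm_power divide_le_eq)
  qed
  ultimately have "((\<lambda>m. u ^ m / of_nat m) has_sum - Ln (1 - u)) UNIV"
    by (intro norm_summable_imp_has_sum)
  then show ?thesis
    by (rule has_sum_from_1_iff_UNIV[THEN iffD2, rotated]) simp
qed

lemma has_sum_minus_ln_one_minus: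
  fixes x :: real
  assumes "\<bar>x\<bar> < 1"
  shows "((\<lambda>m. x ^ m / real m) has_sum - ln (1 - x)) {1..}"
proof -
  have "((\<lambda>m. of_real x ^ m / of_nat m) has_sum - Ln (1 - of_real x)) {1..}"
    using has_sum_minus_Ln_one_minus[of "of_real x"] assms by simp
  moreover have "Ln (1 - of_real x) = of_real (ln (1 - x))"
    using assms Ln_of_real[of "1 - x"] by simp
  ultimately have "((\<lambda>m. of_real (x ^ m / real m) :: complex) has_sum of_real (- ln (1 - x))) {1..}"
    by simp
  then show ?thesis
    by (simp only: has_sum_of_real_iff)
qed

lemma minus_ln_one_minus_le:
  fixes x :: real
  assumes "0 \<le> x" "x < 1"
  shows "- ln (1 - x) \<le> x / (1 - x)"
proof -
  have "- ln (1 - x) = ln (inverse (1 - x))"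
    by (simp add: ln_inverse)
  also have "\<dots> \<le> inverse (1 - x) - 1"
    using assms by (intro ln_le_minus_one) simp
  also have "\<dots> = x / (1 - x)"
    using assms by (simp add: field_simps)
  finally show ?thesis .
qed

lemma minus_ln_one_minus_power_bounds:
  fixes x :: real
  assumes "0 \<le> x" "x < 1"
  shows "0 \<le> - ln (1 - x ^ l)" and "- ln (1 - x ^ l) \<le> x ^ l / (1 - x)"
proof -
  show "0 \<le> - ln (1 - x ^ l)"
    using assms by (cases "l = 0") (simp_all add: power_less_one_iff power_le_one)
  show "- ln (1 - x ^ l) \<le> x ^ l / (1 - x)"
  proof (cases "l = 0")
    case False
    have "x ^ l < 1"
      using assms False by (simp add: power_less_one_iff)
    then have "- ln (1 - x ^ l) \<le> x ^ l / (1 - x ^ l)"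
      using assms by (intro minus_ln_one_minus_le) simp_all
    also have "\<dots> \<le> x ^ l / (1 - x)"
      using assms \<open>x ^ l < 1\<close> False power_decreasing[of 1 l x]
      by (intro divide_left_mono mult_pos_pos) simp_all
    finally show ?thesis .
  qed (use assms in simp)
qed

text \<open>The coefficient \<open>c_l(u) = - log (1 - u ^ l)\<close> of the proof idea; at \<open>l = 0\<close>, where
  \<open>Ln 0\<close> is unspecified, it is set to \<open>0\<close>.\<close>
definition neglog_pow :: "nat \<Rightarrow> complex \<Rightarrow> complex" where
  "neglog_pow l u = (if l = 0 then 0 else - Ln (1 - u ^ l))"

lemma has_sum_neglog_pow:
  assumes "norm u < 1" "l \<ge> 1"
  shows "((\<lambda>m. u ^ (l * m) / of_nat m) has_sum neglog_pow l u) {1..}"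
  using has_sum_minus_Ln_one_minus[of "u ^ l"] assms
  by (simp add: neglog_pow_def power_mult norm_power power_less_one_iff)

lemma has_sum_norm_neglog_pow:
  fixes u :: "'a :: real_normed_field"
  assumes "norm u < 1" "l \<ge> 1"
  shows "((\<lambda>m. norm (u ^ (l * m) / of_nat m)) has_sum - ln (1 - norm u ^ l)) {1..}"
proof -
  have "norm (u ^ (l * m) / of_nat m) = (norm u ^ l) ^ m / real m" for m
    by (simp add: norm_divide norm_power power_mult)
  then show ?thesis
    using has_sum_minus_ln_one_minus[of "norm u ^ l"] assms by (simp add: power_less_one_iff)
qed

lemma norm_neglog_pow_le:
  assumes "norm u < 1"
  shows "norm (neglog_pow l u) \<le> norm u ^ l / (1 - norm u)"
proof (cases "l = 0")
  case False
  then have "norm (neglog_pow l u) \<le> - ln (1 - norm u ^ l)"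
    using assms norm_has_sum_bound[OF has_sum_norm_neglog_pow has_sum_neglog_pow] by simp
  also have "\<dots> \<le> norm u ^ l / (1 - norm u)"
    using assms by (intro minus_ln_one_minus_power_bounds) auto
  finally show ?thesis .
qed (use assms in \<open>simp add: neglog_pow_def\<close>)

lemma
  fixes z w :: complex
  assumes z: "norm z < 1" and w: "norm w < 1" and l: "l \<ge> 1"
  shows has_sum_neglog_pow_mult_cnj:
      "((\<lambda>(a, b). z ^ (l * a) / of_nat a * (cnj w ^ (l * b) / of_nat b))
          has_sum neglog_pow l z * cnj (neglog_pow l w)) ({1..} \<times> {1..})"
    and has_sum_norm_neglog_pow_mult_cnj:
      "((\<lambda>(a, b). norm (z ^ (l * a) / of_nat a * (cnj w ^ (l * b) / of_nat b)))
          has_sum (- ln (1 - norm z ^ l)) * (- ln (1 - norm w ^ l))) ({1..} \<times> {1..})"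
proof -
  have norm_z: "((\<lambda>a. norm (z ^ (l * a) / of_nat a)) has_sum - ln (1 - norm z ^ l)) {1..}"
    and norm_w: "((\<lambda>b. norm (cnj w ^ (l * b) / of_nat b)) has_sum - ln (1 - norm w ^ l)) {1..}"
    using has_sum_norm_neglog_pow[of z l] has_sum_norm_neglog_pow[of "cnj w" l] z w l
    by simp_all
  have "((\<lambda>b. cnj w ^ (l * b) / of_nat b) has_sum cnj (neglog_pow l w)) {1..}"
    using has_sum_neglog_pow[OF w l] has_sum_cnj_iff[of "\<lambda>b. w ^ (l * b) / of_nat b"] by simp
  with has_sum_neglog_pow[OF z l]
  show "((\<lambda>(a, b). z ^ (l * a) / of_nat a * (cnj w ^ (l * b) / of_nat b))
          has_sum neglog_pow l z * cnj (neglog_pow l w)) ({1..} \<times> {1..})"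
    using norm_z norm_w by (intro has_sum_product) (auto dest: has_sum_imp_summable)
  have "((\<lambda>(a, b). norm (z ^ (l * a) / of_nat a) * norm (cnj w ^ (l * b) / of_nat b))
          has_sum (- ln (1 - norm z ^ l)) * (- ln (1 - norm w ^ l))) ({1..} \<times> {1..})"
    using norm_z norm_w by (intro has_sum_product) (auto dest: has_sum_imp_summable)
  then show "((\<lambda>(a, b). norm (z ^ (l * a) / of_nat a * (cnj w ^ (l * b) / of_nat b)))
          has_sum (- ln (1 - norm z ^ l)) * (- ln (1 - norm w ^ l))) ({1..} \<times> {1..})"
    by (simp only: norm_mult)
qed

lemma has_sum_divisor_pairs_iff:
  fixes g :: "nat \<times> nat \<Rightarrow> 'a :: topological_comm_monoid_add"
  shows "(g has_sum S) ({1..} \<times> {1..})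
           \<longleftrightarrow> ((\<lambda>(k, l). g (l, k div l)) has_sum S) (SIGMA k:{1..}. {l\<in>{1..k}. l dvd k})"
proof (rule has_sum_reindex_bij_witness[where i = "\<lambda>(k, l). (l, k div l)" and j = "\<lambda>(l, m). (l * m, l)"])
  show "(\<lambda>(k, l). (l, k div l)) ((\<lambda>(l, m). (l * m, l)) p) = p"
    and "(\<lambda>(l, m). (l * m, l)) p \<in> (SIGMA k:{1..}. {l\<in>{1..k}. l dvd k})"
    if "p \<in> {1..} \<times> {1..}" for p :: "nat \<times> nat"
    using that by auto
  show "(\<lambda>(l, m). (l * m, l)) ((\<lambda>(k, l). (l, k div l)) q) = q"
    and "(\<lambda>(k, l). (l, k div l)) q \<in> {1..} \<times> {1..}"
    if "q \<in> (SIGMA k:{1..}. {l\<in>{1..k}. l dvd k})" for q :: "nat \<times> nat"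
    using that by (auto elim!: dvdE)
qed auto

lemma has_sum_weighted_neglog_pow:
  fixes y :: "nat \<Rightarrow> real" and z :: complex
  assumes z: "norm z < 1" and y: "summable (\<lambda>l. \<bar>y l\<bar> * norm z ^ l)"
  shows "((\<lambda>(l, m). of_real (y l) * (z ^ (l * m) / of_nat m))
           has_sum (\<Sum>l. of_real (y l) * neglog_pow l z)) ({1..} \<times> {1..})"
proof -
  define t where "t = (\<lambda>(l, m). of_real (y l) * (z ^ (l * m) / of_nat m) :: complex)"
  have inner: "((\<lambda>m. t (l, m)) has_sum of_real (y l) * neglog_pow l z) {1..}" if "l \<in> {1..}" for l
    unfolding t_def using has_sum_cmult_right[OF has_sum_neglog_pow[OF z]] that by auto
  have inner_norm: "((\<lambda>m. norm (t (l, m))) has_sum \<bar>y l\<bar> * - ln (1 - norm z ^ l)) {1..}"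
    if "l \<in> {1..}" for l
  proof -
    have "norm (t (l, m)) = \<bar>y l\<bar> * norm (z ^ (l * m) / of_nat m)" for m
      by (simp add: t_def norm_mult norm_divide)
    then show ?thesis
      using has_sum_cmult_right[OF has_sum_norm_neglog_pow[OF z], of l "\<bar>y l\<bar>"] that
      by simp
  qed
  have "(\<lambda>l. \<bar>y l\<bar> * - ln (1 - norm z ^ l)) summable_on {1..}"
  proof (rule summable_on_comparison_nat)
    show "summable (\<lambda>l. \<bar>y l\<bar> * norm z ^ l / (1 - norm z))"
      by (rule summable_divide[OF y])
    show "\<bar>y l\<bar> * - ln (1 - norm z ^ l) \<le> \<bar>y l\<bar> * norm z ^ l / (1 - norm z)" for l
      using mult_left_mono[OF minus_ln_one_minus_power_bounds(2)[of "norm z" l]] z by simp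
    show "0 \<le> \<bar>y l\<bar> * - ln (1 - norm z ^ l)" for l
      using minus_ln_one_minus_power_bounds(1)[of "norm z" l] z by (simp add: mult_nonneg_nonpos)
  qed (use z in simp)
  then have "(\<lambda>p. norm (t p)) summable_on {1..} \<times> {1..}"
    by (intro summable_on_SigmaI[OF inner_norm]) auto
  then obtain T where T: "(t has_sum T) ({1..} \<times> {1..})"
    unfolding summable_on_iff_abs_summable_on_complex[symmetric] summable_on_def by blast
  have "((\<lambda>l. of_real (y l) * neglog_pow l z) has_sum T) {1..}"
    by (rule has_sum_SigmaD[OF T inner])
  then have "(\<Sum>l. of_real (y l) * neglog_pow l z) = T"
    by (intro sums_unique[symmetric] has_sum_from_1_imp_sums) (simp_all add: neglog_pow_def)
  with T show ?thesis
    by (simp add: t_def)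
qed

lemma sums_divisor_series:
  fixes y :: "nat \<Rightarrow> real" and z :: complex
  assumes "norm z < 1" and "summable (\<lambda>l. \<bar>y l\<bar> * norm z ^ l)"
  shows "(\<lambda>k. of_real ((\<Sum>l\<in>{l\<in>{1..k}. l dvd k}. real l * y l) / real k) * z ^ k)
           sums (\<Sum>l. of_real (y l) * neglog_pow l z)"
proof -
  define D where "D k = {l\<in>{1..k}. l dvd k}" for k :: nat
  have "((\<lambda>(k, l). of_real (y l) * (z ^ (l * (k div l)) / of_nat (k div l)))
      has_sum (\<Sum>l. of_real (y l) * neglog_pow l z)) (Sigma {1..} D)"
    using has_sum_weighted_neglog_pow[OF assms] unfolding D_def has_sum_divisor_pairs_iff
    by (simp add: case_prod_unfold)
  then have "((\<lambda>k. \<Sum>l\<in>D k. of_real (y l) * (z ^ (l * (k div l)) / of_nat (k div l)))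
      has_sum (\<Sum>l. of_real (y l) * neglog_pow l z)) {1..}"
    by (rule has_sum_SigmaD) (unfold prod.case, rule has_sum_finite, simp add: D_def)
  moreover have "(\<Sum>l\<in>D k. of_real (y l) * (z ^ (l * (k div l)) / of_nat (k div l)))
      = of_real ((\<Sum>l\<in>D k. real l * y l) / real k) * z ^ k" for k
  proof -
    have "of_real (y l) * (z ^ (l * (k div l)) / of_nat (k div l)) = of_real (real l * y l / real k) * z ^ k"
      if "l \<in> D k" for l
      using that by (auto simp: D_def elim!: dvdE)
    then show ?thesis
      by (simp add: sum_divide_distrib sum_distrib_right)
  qed
  ultimately show ?thesis
    unfolding D_def by (intro has_sum_from_1_imp_sums) simp_all
qed

lemma borel_measurable_cnj [measurable (raw)]:
  "f \<in> borel_measurable M \<Longrightarrow> (\<lambda>x. cnj (f x :: complex)) \<in> borel_measurable M"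
  by (erule measurable_compose) (intro borel_measurable_continuous_onI continuous_intros)

lemma summable_integral_imp_AE_summable:
  fixes f :: "nat \<Rightarrow> 'a \<Rightarrow> real"
  assumes int: "\<And>i. integrable M (f i)" and nonneg: "\<And>i x. 0 \<le> f i x"
    and summable: "summable (\<lambda>i. integral\<^sup>L M (f i))"
  shows "AE x in M. summable (\<lambda>i. f i x)"
proof -
  have [measurable]: "\<And>i. f i \<in> borel_measurable M"
    using int by auto
  have "(\<integral>\<^sup>+ x. (\<Sum>i. ennreal (f i x)) \<partial>M) = (\<Sum>i. \<integral>\<^sup>+ x. ennreal (f i x) \<partial>M)"
    by (rule nn_integral_suminf) auto
  also have "\<dots> = (\<Sum>i. ennreal (integral\<^sup>L M (f i)))"
    by (intro suminf_cong nn_integral_eq_integral int) (auto simp: nonneg)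
  also have "\<dots> = ennreal (\<Sum>i. integral\<^sup>L M (f i))"
    by (rule suminf_ennreal2) (use summable nonneg in \<open>auto intro: integral_nonneg_AE\<close>)
  finally have "(\<integral>\<^sup>+ x. (\<Sum>i. ennreal (f i x)) \<partial>M) \<noteq> \<infinity>"
    by simp
  then have "AE x in M. (\<Sum>i. ennreal (f i x)) \<noteq> \<infinity>"
    by (intro nn_integral_noteq_infinite) auto
  then show ?thesis
    by eventually_elim (rule summable_suminf_not_top, use nonneg in auto)
qed

lemma integral_norm_suminf_le:
  fixes f :: "nat \<Rightarrow> 'a \<Rightarrow> 'b :: {banach, second_countable_topology}"
  assumes int: "\<And>i. integrable M (f i)"
    and AE_summable: "AE x in M. summable (\<lambda>i. norm (f i x))"
    and summable: "summable (\<lambda>i. \<integral>x. norm (f i x) \<partial>M)"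
  shows "(\<integral>x. norm (\<Sum>i. f i x) \<partial>M) \<le> (\<Sum>i. \<integral>x. norm (f i x) \<partial>M)"
proof -
  have int_norm: "\<And>i. integrable M (\<lambda>x. norm (f i x))"
    using int by auto
  have AE_summable': "AE x in M. summable (\<lambda>i. norm (norm (f i x)))"
    and summable': "summable (\<lambda>i. \<integral>x. norm (norm (f i x)) \<partial>M)"
    using AE_summable summable by simp_all
  have "(\<integral>x. norm (\<Sum>i. f i x) \<partial>M) \<le> (\<integral>x. (\<Sum>i. norm (f i x)) \<partial>M)"
    using AE_summable
    by (intro integral_mono_AE integrable_norm integrable_suminf[OF int AE_summable summable]
        integrable_suminf[OF int_norm AE_summable' summable'])
       (auto elim!: eventually_mono intro: summable_norm)
  also have "\<dots> = (\<Sum>i. \<integral>x. norm (f i x) \<partial>M)"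
    by (rule integral_suminf[OF int_norm AE_summable' summable'])
  finally show ?thesis .
qed

lemma
  fixes \<phi> :: "'a \<Rightarrow> complex" and G :: "nat \<Rightarrow> 'a \<Rightarrow> complex"
  assumes [measurable]: "\<phi> \<in> borel_measurable M" "\<And>m. G m \<in> borel_measurable M"
    and int: "\<And>m. integrable M (\<lambda>x. \<phi> x * cnj (G m x))"
    and G: "AE x in M. summable (\<lambda>m. norm (G m x))"
    and summable: "summable (\<lambda>m. \<integral>x. norm (\<phi> x * cnj (G m x)) \<partial>M)"
  shows integrable_mult_cnj_suminf: "integrable M (\<lambda>x. \<phi> x * cnj (\<Sum>m. G m x))"
    and integral_mult_cnj_suminf:
      "(\<integral>x. \<phi> x * cnj (\<Sum>m. G m x) \<partial>M) = (\<Sum>m. \<integral>x. \<phi> x * cnj (G m x) \<partial>M)"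
    and integral_norm_mult_cnj_suminf_le:
      "(\<integral>x. norm (\<phi> x * cnj (\<Sum>m. G m x)) \<partial>M) \<le> (\<Sum>m. \<integral>x. norm (\<phi> x * cnj (G m x)) \<partial>M)"
proof -
  have AE_eq: "AE x in M. \<phi> x * cnj (\<Sum>m. G m x) = (\<Sum>m. \<phi> x * cnj (G m x))"
    using G
  proof eventually_elim
    case (elim x)
    then have "(\<lambda>m. cnj (G m x)) sums cnj (\<Sum>m. G m x)"
      by (simp add: sums_cnj summable_norm_cancel summable_sums)
    then show ?case
      by (intro sums_unique sums_mult)
  qed
  have AE_summable: "AE x in M. summable (\<lambda>m. norm (\<phi> x * cnj (G m x)))"
    using G by eventually_elim (simp add: norm_mult summable_mult)
  show "integrable M (\<lambda>x. \<phi> x * cnj (\<Sum>m. G m x))"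
    by (rule integrable_cong_AE_imp[OF integrable_suminf[OF int AE_summable summable]])
       (use AE_eq in \<open>auto elim: eventually_mono\<close>)
  have "(\<integral>x. \<phi> x * cnj (\<Sum>m. G m x) \<partial>M) = (\<integral>x. (\<Sum>m. \<phi> x * cnj (G m x)) \<partial>M)"
    and "(\<integral>x. norm (\<phi> x * cnj (\<Sum>m. G m x)) \<partial>M) = (\<integral>x. norm (\<Sum>m. \<phi> x * cnj (G m x)) \<partial>M)"
    using AE_eq by (auto intro!: integral_cong_AE elim: eventually_mono)
  then show "(\<integral>x. \<phi> x * cnj (\<Sum>m. G m x) \<partial>M) = (\<Sum>m. \<integral>x. \<phi> x * cnj (G m x) \<partial>M)"
    and "(\<integral>x. norm (\<phi> x * cnj (\<Sum>m. G m x)) \<partial>M) \<le> (\<Sum>m. \<integral>x. norm (\<phi> x * cnj (G m x)) \<partial>M)"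
    using integral_suminf[OF int AE_summable summable]
      integral_norm_suminf_le[OF int AE_summable summable] by simp_all
qed

lemma integral_suminf_mult_cnj_suminf:
  fixes F G :: "nat \<Rightarrow> 'a \<Rightarrow> complex" and p q :: "nat \<Rightarrow> real"
  assumes [measurable]: "\<And>l. F l \<in> borel_measurable M" "\<And>m. G m \<in> borel_measurable M"
    and int: "\<And>l m. integrable M (\<lambda>x. F l x * cnj (G m x))"
    and bound: "\<And>l m. (\<integral>x. norm (F l x * cnj (G m x)) \<partial>M) \<le> p l * q m"
    and p: "summable p" and q: "summable q"
    and F: "AE x in M. summable (\<lambda>l. norm (F l x))"
    and G: "AE x in M. summable (\<lambda>m. norm (G m x))"
  shows "(\<integral>x. (\<Sum>l. F l x) * cnj (\<Sum>m. G m x) \<partial>M)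
           = (\<Sum>l. \<Sum>m. \<integral>x. F l x * cnj (G m x) \<partial>M)"
proof -
  have summable_l: "summable (\<lambda>m. \<integral>x. norm (F l x * cnj (G m x)) \<partial>M)" for l
    using bound by (intro summable_comparison_test'[OF summable_mult[OF q, of "p l"]]) simp
  have "(\<integral>x. norm (F l x * cnj (\<Sum>m. G m x)) \<partial>M) \<le> (\<Sum>m. p l * q m)" for l
  proof -
    have "(\<integral>x. norm (F l x * cnj (\<Sum>m. G m x)) \<partial>M) \<le> (\<Sum>m. \<integral>x. norm (F l x * cnj (G m x)) \<partial>M)"
      by (rule integral_norm_mult_cnj_suminf_le[OF _ _ int G summable_l]) simp_all
    also have "\<dots> \<le> (\<Sum>m. p l * q m)"
      by (intro suminf_le bound summable_l summable_mult q)
    finally show ?thesis .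
  qed
  then have "summable (\<lambda>l. \<integral>x. norm (F l x * cnj (\<Sum>m. G m x)) \<partial>M)"
    by (intro summable_comparison_test'[OF summable_mult2[OF p, of "suminf q"]])
       (simp add: suminf_mult[OF q])
  moreover have "AE x in M. summable (\<lambda>l. norm (F l x * cnj (\<Sum>m. G m x)))"
    using F by eventually_elim (simp add: norm_mult summable_mult2)
  moreover have "integrable M (\<lambda>x. F l x * cnj (\<Sum>m. G m x))" for l
    by (rule integrable_mult_cnj_suminf[OF _ _ int G summable_l]) simp_all
  ultimately have integral_by_l: "(\<integral>x. (\<Sum>l. F l x * cnj (\<Sum>m. G m x)) \<partial>M)
      = (\<Sum>l. \<integral>x. F l x * cnj (\<Sum>m. G m x) \<partial>M)"
    by (intro integral_suminf)
  have "(\<integral>x. (\<Sum>l. F l x) * cnj (\<Sum>m. G m x) \<partial>M) = (\<integral>x. (\<Sum>l. F l x * cnj (\<Sum>m. G m x)) \<partial>M)"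
    using F by (intro integral_cong_AE) (auto elim!: eventually_mono simp: suminf_mult2 summable_norm_cancel)
  also have "\<dots> = (\<Sum>l. \<Sum>m. \<integral>x. F l x * cnj (G m x) \<partial>M)"
    unfolding integral_by_l by (simp add: integral_mult_cnj_suminf[OF _ _ int G summable_l])
  finally show ?thesis .
qed

locale poisson_series =
  fixes M :: "'a measure" and \<theta> :: "nat \<Rightarrow> real" and r :: real and Y :: "nat \<Rightarrow> 'a \<Rightarrow> nat"
  assumes prob_space_M: "prob_space M"
    and theta_pos: "\<And>k. k \<ge> 1 \<Longrightarrow> \<theta> k > 0"
    and r_pos: "0 < r"
    and conv_radius_theta: "conv_radius (\<lambda>k. \<theta> k / real k) = ereal r"
    and indep_Y: "prob_space.indep_vars M (\<lambda>_. count_space UNIV) Y {1..}"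
    and distr_Y: "\<And>l. l \<ge> 1 \<Longrightarrow>
           distr M (count_space UNIV) (Y l) = measure_pmf (poisson_pmf (r ^ l * \<theta> l / real l))"
begin

sublocale prob_space M
  by (rule prob_space_M)

definition rate :: "nat \<Rightarrow> real" where
  "rate l = r ^ l * \<theta> l / real l"

text \<open>\<open>Y 0\<close> is not constrained by the hypotheses; \<open>Z\<close> replaces it by \<open>0\<close>, so that series
  over \<open>l\<close> may run over all of \<open>nat\<close>.\<close>
definition Z :: "nat \<Rightarrow> 'a \<Rightarrow> real" where
  "Z l x = (if l = 0 then 0 else real (Y l x))"

lemma rate_0 [simp]: "rate 0 = 0"
  by (simp add: rate_def)

lemma rate_pos: "l \<ge> 1 \<Longrightarrow> rate l > 0"
  using theta_pos r_pos by (simp add: rate_def)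

lemma rate_nonneg: "rate l \<ge> 0"
  using rate_pos[of l] by (cases l) auto

lemma Z_nonneg: "Z l x \<ge> 0"
  by (simp add: Z_def)

lemma measurable_Y: "l \<ge> 1 \<Longrightarrow> Y l \<in> measurable M (count_space UNIV)"
  using indep_Y by (auto simp: indep_vars_def)

lemma borel_measurable_Z [measurable]: "Z l \<in> borel_measurable M"
  using measurable_compose[OF measurable_Y, of l real borel]
  by (cases "l = 0") (auto simp: Z_def[abs_def])

lemma
  shows integrable_Z: "integrable M (Z l)"
    and expectation_Z: "expectation (Z l) = rate l"
    and integrable_Z_square: "integrable M (\<lambda>x. Z l x ^ 2)"
    and expectation_Z_square: "expectation (\<lambda>x. Z l x ^ 2) = rate l ^ 2 + rate l"
proof -
  have "integrable M (Z l) \<and> expectation (Z l) = rate l \<and>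
    integrable M (\<lambda>x. Z l x ^ 2) \<and> expectation (\<lambda>x. Z l x ^ 2) = rate l ^ 2 + rate l"
  proof (cases "l = 0")
    case False
    then have l: "l \<ge> 1" by simp
    have distr: "distr M (count_space UNIV) (Y l) = measure_pmf (poisson_pmf (rate l))"
      using distr_Y[OF l] by (simp add: rate_def)
    have Z_l: "Z l = (\<lambda>x. real (Y l x))"
      using False by (simp add: Z_def[abs_def])
    show ?thesis
      unfolding Z_l
      using integrable_distr_eq[OF measurable_Y[OF l], of real]
        integrable_distr_eq[OF measurable_Y[OF l], of "\<lambda>k. real k ^ 2"]
        integral_distr[OF measurable_Y[OF l], of real]
        integral_distr[OF measurable_Y[OF l], of "\<lambda>k. real k ^ 2"]
        integrable_poisson_pmf[OF rate_pos[OF l]] expectation_poisson_pmf[OF rate_pos[OF l]]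
        integrable_poisson_pmf_square[OF rate_pos[OF l]]
        expectation_poisson_pmf_square[OF rate_pos[OF l]]
      by (simp add: distr)
  qed (simp add: Z_def[abs_def])
  then show "integrable M (Z l)" "expectation (Z l) = rate l"
    "integrable M (\<lambda>x. Z l x ^ 2)" "expectation (\<lambda>x. Z l x ^ 2) = rate l ^ 2 + rate l"
    by auto
qed

lemma
  shows integrable_Z_mult: "integrable M (\<lambda>x. Z l x * Z m x)"
    and expectation_Z_mult:
      "expectation (\<lambda>x. Z l x * Z m x) = rate l * rate m + (if l = m then rate l else 0)"
proof -
  have "integrable M (\<lambda>x. Z l x * Z m x) \<and>
    expectation (\<lambda>x. Z l x * Z m x) = rate l * rate m + (if l = m then rate l else 0)"
  proof (cases "l = m \<or> l = 0 \<or> m = 0")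
    case True
    then show ?thesis
      using integrable_Z_square[of l] expectation_Z_square[of l]
      by (auto simp: Z_def power2_eq_square)
  next
    case False
    then have "indep_vars (\<lambda>_. count_space UNIV) Y {l, m}"
      by (intro indep_vars_subset[OF indep_Y]) auto
    then have "indep_vars (\<lambda>_. borel) (\<lambda>i x. real (Y i x)) {l, m}"
      by (rule indep_vars_compose2) auto
    then have indep: "indep_vars (\<lambda>_. borel) Z {l, m}"
      by (rule indep_vars_cong[THEN iffD1, rotated -1]) (use False in \<open>auto simp: Z_def[abs_def]\<close>)
    have "(\<lambda>x. \<Prod>i\<in>{l, m}. Z i x) = (\<lambda>x. Z l x * Z m x)"
      using False by auto
    then show ?thesis
      using indep_vars_lebesgue_integral[OF _ indep] indep_vars_integrable[OF _ indep]
        integrable_Z expectation_Z False by simp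
  qed
  then show "integrable M (\<lambda>x. Z l x * Z m x)"
    "expectation (\<lambda>x. Z l x * Z m x) = rate l * rate m + (if l = m then rate l else 0)"
    by auto
qed

lemma
  shows integrable_centred_Z_mult: "integrable M (\<lambda>x. (Z l x - rate l) * (Z m x - rate m))"
    and expectation_centred_Z_mult:
      "expectation (\<lambda>x. (Z l x - rate l) * (Z m x - rate m)) = (if l = m then rate l else 0)"
proof -
  have expand: "(\<lambda>x. (Z l x - rate l) * (Z m x - rate m)) =
     (\<lambda>x. Z l x * Z m x - rate m * Z l x - rate l * Z m x + rate l * rate m)"
    by (simp add: algebra_simps)
  show "integrable M (\<lambda>x. (Z l x - rate l) * (Z m x - rate m))"
    unfolding expand using integrable_Z_mult integrable_Z by auto
  show "expectation (\<lambda>x. (Z l x - rate l) * (Z m x - rate m)) = (if l = m then rate l else 0)"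
    unfolding expand using integrable_Z_mult integrable_Z
    by (simp add: expectation_Z_mult expectation_Z prob_space)
qed

text \<open>The bound is not sharp, but it factorizes in \<open>l\<close> and \<open>m\<close>.\<close>
lemma expectation_abs_centred_Z_mult_le:
  "expectation (\<lambda>x. \<bar>(Z l x - rate l) * (Z m x - rate m)\<bar>) \<le> (2 * rate l + 1) * (2 * rate m + 1)"
proof -
  have expand: "(\<lambda>x. (Z l x + rate l) * (Z m x + rate m)) =
     (\<lambda>x. Z l x * Z m x + rate m * Z l x + rate l * Z m x + rate l * rate m)"
    by (simp add: algebra_simps)
  have int: "integrable M (\<lambda>x. (Z l x + rate l) * (Z m x + rate m))"
    unfolding expand using integrable_Z_mult integrable_Z by auto
  have "\<bar>(Z l x - rate l) * (Z m x - rate m)\<bar> \<le> (Z l x + rate l) * (Z m x + rate m)" for x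
    unfolding abs_mult
    using Z_nonneg[of l x] Z_nonneg[of m x] rate_nonneg[of l] rate_nonneg[of m]
    by (intro mult_mono) auto
  then have "expectation (\<lambda>x. \<bar>(Z l x - rate l) * (Z m x - rate m)\<bar>)
      \<le> expectation (\<lambda>x. (Z l x + rate l) * (Z m x + rate m))"
    using integrable_centred_Z_mult int by (intro integral_mono) auto
  also have "\<dots> = 4 * rate l * rate m + (if l = m then rate l else 0)"
    unfolding expand using integrable_Z_mult integrable_Z
    by (simp add: expectation_Z_mult expectation_Z prob_space)
  also have "\<dots> \<le> (2 * rate l + 1) * (2 * rate m + 1)"
    using rate_nonneg[of l] rate_nonneg[of m] by (simp add: algebra_simps)
  finally show ?thesis .
qed

lemma summable_rate_power:
  assumes "0 \<le> \<rho>" "\<rho> < 1"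
  shows "summable (\<lambda>l. rate l * \<rho> ^ l)"
proof -
  have "ereal (norm (r * \<rho>)) < conv_radius (\<lambda>k. \<theta> k / real k)"
    using assms r_pos conv_radius_theta by (simp add: abs_mult mult_less_cancel_left1)
  then have "summable (\<lambda>l. norm (\<theta> l / real l * (r * \<rho>) ^ l))"
    by (rule abs_summable_in_conv_radius)
  moreover have "norm (\<theta> l / real l * (r * \<rho>) ^ l) = rate l * \<rho> ^ l" for l
    using theta_pos[of l] r_pos assms
    by (cases "l = 0") (simp_all add: rate_def abs_mult power_mult_distrib)
  ultimately show ?thesis
    by simp
qed

lemma AE_summable_Z_power:
  assumes "0 \<le> \<rho>" "\<rho> < 1"
  shows "AE x in M. summable (\<lambda>l. Z l x * \<rho> ^ l)"
  using integrable_Z Z_nonneg assms summable_rate_power[OF assms]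
  by (intro summable_integral_imp_AE_summable) (simp_all add: expectation_Z)

lemma summable_rate_neglog_pow:
  assumes "norm u < 1"
  shows "summable (\<lambda>l. (2 * rate l + 1) * norm (neglog_pow l u))"
proof (rule summable_comparison_test')
  have "summable (\<lambda>l. (2 * (rate l * norm u ^ l) + norm u ^ l) / (1 - norm u))"
    using assms summable_rate_power[of "norm u"]
    by (intro summable_divide summable_add summable_mult summable_geometric) auto
  then show "summable (\<lambda>l. (2 * rate l + 1) * (norm u ^ l / (1 - norm u)))"
    by (simp add: algebra_simps add_divide_distrib)
  show "norm ((2 * rate l + 1) * norm (neglog_pow l u)) \<le> (2 * rate l + 1) * (norm u ^ l / (1 - norm u))"
    for l
    using mult_left_mono[OF norm_neglog_pow_le[OF assms, of l], of "2 * rate l + 1"] rate_nonneg[of l]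
    by simp
qed

lemma AE_summable_Z_neglog_pow:
  assumes "norm u < 1"
  shows "AE x in M. summable (\<lambda>l. norm (of_real (Z l x) * neglog_pow l u))"
proof -
  have "AE x in M. summable (\<lambda>l. Z l x * norm u ^ l)"
    using assms by (intro AE_summable_Z_power) auto
  then show ?thesis
  proof eventually_elim
  case (elim x)
  show ?case
  proof (rule summable_comparison_test')
    show "summable (\<lambda>l. Z l x * norm u ^ l / (1 - norm u))"
      using elim by (intro summable_divide) simp
    show "norm (norm (of_real (Z l x) * neglog_pow l u)) \<le> Z l x * norm u ^ l / (1 - norm u)" for l
      using mult_left_mono[OF norm_neglog_pow_le[OF assms, of l] Z_nonneg[of l x]]
      by (simp add: norm_mult Z_nonneg)
  qed
  qed
qed

lemma real_Xvar: "real (Xvar Y k x) = (\<Sum>l\<in>{l\<in>{1..k}. l dvd k}. real l * Z l x)"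
  unfolding Xvar_def by (simp add: Z_def)

lemma borel_measurable_fvar [measurable]: "fvar Y z \<in> borel_measurable M"
  unfolding fvar_def[abs_def] real_Xvar by measurable

lemma AE_fvar_eq_series:
  assumes "norm z < 1"
  shows "AE x in M. fvar Y z x = (\<Sum>l. of_real (Z l x) * neglog_pow l z)"
proof -
  have "AE x in M. summable (\<lambda>l. Z l x * norm z ^ l)"
    using assms by (intro AE_summable_Z_power) auto
  then show ?thesis
  proof eventually_elim
  case (elim x)
  then have "(\<lambda>k. of_real ((\<Sum>l\<in>{l\<in>{1..k}. l dvd k}. real l * Z l x) / real k) * z ^ k)
      sums (\<Sum>l. of_real (Z l x) * neglog_pow l z)"
    by (intro sums_divisor_series) (use assms in \<open>simp_all add: Z_nonneg\<close>)
  then show ?case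
    unfolding fvar_def real_Xvar by (rule sums_unique[symmetric])
  qed
qed

lemma expectation_fvar:
  assumes "norm z < 1"
  shows "expectation (fvar Y z) = (\<Sum>l. of_real (rate l) * neglog_pow l z)"
proof -
  define F where "F l x = of_real (Z l x) * neglog_pow l z" for l x
  have int: "integrable M (F l)" for l
    unfolding F_def[abs_def] using integrable_Z[of l] by simp
  have norm_F: "(\<integral>x. norm (F l x) \<partial>M) = rate l * norm (neglog_pow l z)" for l
    using expectation_Z[of l] by (simp add: F_def norm_mult Z_nonneg)
  have summable: "summable (\<lambda>l. \<integral>x. norm (F l x) \<partial>M)"
    unfolding norm_F using rate_nonneg
    by (intro summable_comparison_test'[OF summable_rate_neglog_pow[OF assms]])
       (simp add: mult_right_mono)
  have AE_summable: "AE x in M. summable (\<lambda>l. norm (F l x))"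
    using AE_summable_Z_neglog_pow[OF assms] by (simp add: F_def)
  have AE_eq: "AE x in M. fvar Y z x = (\<Sum>l. F l x)"
    using AE_fvar_eq_series[OF assms] by (simp add: F_def)
  have [measurable]: "(\<lambda>x. \<Sum>l. F l x) \<in> borel_measurable M"
    unfolding F_def by measurable
  have "expectation (fvar Y z) = expectation (\<lambda>x. \<Sum>l. F l x)"
    using AE_eq by (intro integral_cong_AE) simp_all
  also have "\<dots> = (\<Sum>l. expectation (F l))"
    by (rule integral_suminf[OF int AE_summable summable])
  also have "\<dots> = (\<Sum>l. of_real (rate l) * neglog_pow l z)"
    using expectation_Z by (simp add: F_def[abs_def])
  finally show ?thesis .
qed

lemma AE_centred_fvar_eq_series:
  assumes "norm z < 1"
  shows "AE x in M. summable (\<lambda>l. norm (of_real (Z l x - rate l) * neglog_pow l z)) \<and>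
    fvar Y z x - expectation (fvar Y z) = (\<Sum>l. of_real (Z l x - rate l) * neglog_pow l z)"
proof -
  have rate_summable: "summable (\<lambda>l. norm (of_real (rate l) * neglog_pow l z))"
    using rate_nonneg
    by (intro summable_comparison_test'[OF summable_rate_neglog_pow[OF assms]])
       (simp add: norm_mult mult_right_mono)
  show ?thesis
    using AE_summable_Z_neglog_pow[OF assms] AE_fvar_eq_series[OF assms]
  proof eventually_elim
    case (elim x)
    have "summable (\<lambda>l. norm (of_real (Z l x) * neglog_pow l z - of_real (rate l) * neglog_pow l z))"
      by (rule summable_comparison_test'[OF summable_add[OF elim(1) rate_summable]])
         (simp add: norm_triangle_ineq4)
    then show ?case
      unfolding elim(2) expectation_fvar[OF assms]
      using suminf_diff[OF summable_norm_cancel[OF elim(1)] summable_norm_cancel[OF rate_summable]]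
      by (simp add: left_diff_distrib)
  qed
qed

lemma
  fixes u v :: complex
  shows integrable_centred_terms_mult_cnj:
      "integrable M (\<lambda>x. of_real (Z l x - rate l) * u * cnj (of_real (Z m x - rate m) * v))"
    and expectation_centred_terms_mult_cnj:
      "expectation (\<lambda>x. of_real (Z l x - rate l) * u * cnj (of_real (Z m x - rate m) * v))
         = (if m = l then of_real (rate l) * u * cnj v else 0)"
    and expectation_norm_centred_terms_mult_cnj_le:
      "expectation (\<lambda>x. norm (of_real (Z l x - rate l) * u * cnj (of_real (Z m x - rate m) * v)))
         \<le> (2 * rate l + 1) * norm u * ((2 * rate m + 1) * norm v)"
proof -
  have eq: "of_real (Z l x - rate l) * u * cnj (of_real (Z m x - rate m) * v)
      = of_real ((Z l x - rate l) * (Z m x - rate m)) * (u * cnj v)" for x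
    by simp
  show "integrable M (\<lambda>x. of_real (Z l x - rate l) * u * cnj (of_real (Z m x - rate m) * v))"
    unfolding eq by (intro integrable_mult_left integrable_of_real integrable_centred_Z_mult)
  show "expectation (\<lambda>x. of_real (Z l x - rate l) * u * cnj (of_real (Z m x - rate m) * v))
      = (if m = l then of_real (rate l) * u * cnj v else 0)"
    unfolding eq
    by (simp only: integral_mult_left_zero integral_complex_of_real expectation_centred_Z_mult) auto
  have "expectation (\<lambda>x. norm (of_real (Z l x - rate l) * u * cnj (of_real (Z m x - rate m) * v)))
      = expectation (\<lambda>x. \<bar>(Z l x - rate l) * (Z m x - rate m)\<bar>) * (norm u * norm v)"
    unfolding eq norm_mult norm_of_real complex_mod_cnj by (rule integral_mult_left_zero)
  also have "\<dots> \<le> (2 * rate l + 1) * (2 * rate m + 1) * (norm u * norm v)"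
    by (intro mult_right_mono expectation_abs_centred_Z_mult_le) simp
  finally show "expectation (\<lambda>x. norm (of_real (Z l x - rate l) * u * cnj (of_real (Z m x - rate m) * v)))
      \<le> (2 * rate l + 1) * norm u * ((2 * rate m + 1) * norm v)"
    by (simp add: algebra_simps)
qed

lemma ccov_fvar:
  assumes z: "norm z < 1" and w: "norm w < 1"
  shows "ccov M (fvar Y z) (fvar Y w)
           = (\<Sum>l. of_real (rate l) * neglog_pow l z * cnj (neglog_pow l w))"
proof -
  define F where "F l x = of_real (Z l x - rate l) * neglog_pow l z" for l x
  define G where "G m x = of_real (Z m x - rate m) * neglog_pow m w" for m x
  have [measurable]: "F l \<in> borel_measurable M" "G l \<in> borel_measurable M" for l
    unfolding F_def[abs_def] G_def[abs_def] by simp_all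
  have AE_eq: "AE x in M. (fvar Y z x - expectation (fvar Y z)) * cnj (fvar Y w x - expectation (fvar Y w))
      = (\<Sum>l. F l x) * cnj (\<Sum>m. G m x)"
    and AE_summable: "AE x in M. summable (\<lambda>l. norm (F l x))" "AE x in M. summable (\<lambda>m. norm (G m x))"
    using AE_centred_fvar_eq_series[OF z] AE_centred_fvar_eq_series[OF w]
    by (eventually_elim, simp add: F_def G_def)+
  have "ccov M (fvar Y z) (fvar Y w) = expectation (\<lambda>x. (\<Sum>l. F l x) * cnj (\<Sum>m. G m x))"
    unfolding ccov_def using AE_eq by (intro integral_cong_AE) simp_all
  also have "\<dots> = (\<Sum>l. \<Sum>m. expectation (\<lambda>x. F l x * cnj (G m x)))"
  proof (rule integral_suminf_mult_cnj_suminf[where p = "\<lambda>l. (2 * rate l + 1) * norm (neglog_pow l z)"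
        and q = "\<lambda>m. (2 * rate m + 1) * norm (neglog_pow m w)"])
    show "integrable M (\<lambda>x. F l x * cnj (G m x))" for l m
      unfolding F_def G_def by (rule integrable_centred_terms_mult_cnj)
    show "(\<integral>x. norm (F l x * cnj (G m x)) \<partial>M)
        \<le> (2 * rate l + 1) * norm (neglog_pow l z) * ((2 * rate m + 1) * norm (neglog_pow m w))" for l m
      unfolding F_def G_def by (rule expectation_norm_centred_terms_mult_cnj_le)
  qed (use summable_rate_neglog_pow[OF z] summable_rate_neglog_pow[OF w] AE_summable in simp_all)
  also have "\<dots> = (\<Sum>l. of_real (rate l) * neglog_pow l z * cnj (neglog_pow l w))"
  proof -
    have single: "(\<Sum>m. if m = l then c else 0) = c" for l and c :: complex
      using sums_single[of l "\<lambda>_. c"] by (simp add: sums_iff)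
    show ?thesis
      unfolding F_def G_def expectation_centred_terms_mult_cnj by (simp add: single cong: if_cong)
  qed
  finally show ?thesis .
qed

lemma has_sum_rate_power:
  assumes "norm u < 1"
  shows "((\<lambda>l. of_real (rate l) * u ^ l) has_sum gfun \<theta> (of_real r * u)) {1..}"
proof -
  have "ereal (norm (of_real r * u)) < conv_radius (\<lambda>k. complex_of_real (\<theta> k / real k))"
    unfolding conv_radius_of_real conv_radius_theta
    using assms r_pos by (simp add: norm_mult mult_less_cancel_left1)
  then have summable: "summable (\<lambda>l. norm (of_real (\<theta> l / real l) * (of_real r * u) ^ l))"
    by (rule abs_summable_in_conv_radius)
  have "((\<lambda>l. of_real (\<theta> l / real l) * (of_real r * u) ^ l) has_sum gfun \<theta> (of_real r * u)) UNIV"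
    using summable_norm_cancel[OF summable]
    by (intro norm_summable_imp_has_sum summable) (simp add: gfun_def summable_sums)
  moreover have "of_real (\<theta> l / real l) * (of_real r * u) ^ l = of_real (rate l) * u ^ l" for l
    by (simp add: rate_def power_mult_distrib)
  ultimately have "((\<lambda>l. of_real (rate l) * u ^ l) has_sum gfun \<theta> (of_real r * u)) UNIV"
    by simp
  then show ?thesis
    by (rule has_sum_from_1_iff_UNIV[THEN iffD2, rotated]) simp
qed

lemma summable_on_rate_log_products:
  assumes z: "norm z < 1" and w: "norm w < 1"
  shows "(\<lambda>l. rate l * ((- ln (1 - norm z ^ l)) * (- ln (1 - norm w ^ l)))) summable_on {1..}"
proof (rule summable_on_comparison_nat)
  show "summable (\<lambda>l. rate l * norm z ^ l * (1 / (1 - norm z) * (1 / (1 - norm w))))"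
    using summable_rate_power[of "norm z"] z by (intro summable_mult2) simp
  fix l :: nat
  have z_bounds: "0 \<le> - ln (1 - norm z ^ l)" "- ln (1 - norm z ^ l) \<le> norm z ^ l * (1 / (1 - norm z))"
    using minus_ln_one_minus_power_bounds[of "norm z" l] z by simp_all
  have "- ln (1 - norm w ^ l) \<le> norm w ^ l / (1 - norm w)"
    using minus_ln_one_minus_power_bounds(2)[of "norm w" l] w by simp
  also have "\<dots> \<le> 1 / (1 - norm w)"
    using w by (intro divide_right_mono power_le_one) simp_all
  finally have w_bounds: "0 \<le> - ln (1 - norm w ^ l)" "- ln (1 - norm w ^ l) \<le> 1 / (1 - norm w)"
    using minus_ln_one_minus_power_bounds(1)[of "norm w" l] w by simp_all
  show "rate l * ((- ln (1 - norm z ^ l)) * (- ln (1 - norm w ^ l)))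
      \<le> rate l * norm z ^ l * (1 / (1 - norm z) * (1 / (1 - norm w)))"
    using mult_left_mono[OF mult_mono[OF z_bounds(2) w_bounds(2) _ w_bounds(1)] rate_nonneg[of l]] z
    by (simp only: mult.assoc) simp
  show "0 \<le> rate l * ((- ln (1 - norm z ^ l)) * (- ln (1 - norm w ^ l)))"
    using z_bounds(1) w_bounds(1) rate_nonneg[of l] by (intro mult_nonneg_nonneg)
qed (use z w rate_nonneg in simp)

lemma has_sum_rate_neglog_pow_triple_series:
  assumes z: "norm z < 1" and w: "norm w < 1"
  shows "((\<lambda>(l, a, b). of_real (rate l) * (z ^ (l * a) / of_nat a * (cnj w ^ (l * b) / of_nat b)))
           has_sum (\<Sum>l. of_real (rate l) * neglog_pow l z * cnj (neglog_pow l w)))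
           ({1..} \<times> ({1..} \<times> {1..}))"
proof -
  define H where "H = (\<lambda>(l, a, b). of_real (rate l)
      * (z ^ (l * a) / of_nat a * (cnj w ^ (l * b) / of_nat b)) :: complex)"
  have inner: "((\<lambda>p. H (l, p)) has_sum of_real (rate l) * neglog_pow l z * cnj (neglog_pow l w))
      ({1..} \<times> {1..})" if "l \<in> {1..}" for l
    using has_sum_cmult_right[OF has_sum_neglog_pow_mult_cnj[OF z w], of l "of_real (rate l)"] that
    by (simp add: H_def case_prod_unfold mult.assoc)
  have inner_norm: "((\<lambda>p. norm (H (l, p)))
      has_sum rate l * ((- ln (1 - norm z ^ l)) * (- ln (1 - norm w ^ l)))) ({1..} \<times> {1..})"
    if "l \<in> {1..}" for l
  proof -
    have "norm (H (l, p)) = rate l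
        * (case p of (a, b) \<Rightarrow> norm (z ^ (l * a) / of_nat a * (cnj w ^ (l * b) / of_nat b)))" for p
      using rate_nonneg[of l]
      by (cases p) (simp only: H_def prod.case norm_mult norm_of_real abs_of_nonneg)
    then show ?thesis
      using has_sum_cmult_right[OF has_sum_norm_neglog_pow_mult_cnj[OF z w], of l "rate l"] that
      by simp
  qed
  have "(\<lambda>p. norm (H p)) summable_on Sigma {1..} (\<lambda>_. {1..} \<times> {1..})"
    using summable_on_rate_log_products[OF z w] by (intro summable_on_SigmaI[OF inner_norm]) auto
  then obtain S where S: "(H has_sum S) ({1..} \<times> ({1..} \<times> {1..}))"
    unfolding summable_on_iff_abs_summable_on_complex[symmetric] summable_on_def by blast
  have "((\<lambda>l. of_real (rate l) * neglog_pow l z * cnj (neglog_pow l w)) has_sum S) {1..}"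
    by (rule has_sum_SigmaD[OF S inner])
  then have "(\<Sum>l. of_real (rate l) * neglog_pow l z * cnj (neglog_pow l w)) = S"
    by (intro sums_unique[symmetric] has_sum_from_1_imp_sums) simp_all
  with S show ?thesis
    by (simp add: H_def)
qed

lemma has_sum_gfun_double_series:
  assumes z: "norm z < 1" and w: "norm w < 1"
  shows "((\<lambda>(a, b). gfun \<theta> (of_real r * z ^ a * cnj w ^ b) / of_nat (a * b))
           has_sum (\<Sum>l. of_real (rate l) * neglog_pow l z * cnj (neglog_pow l w))) ({1..} \<times> {1..})"
proof -
  define H where "H = (\<lambda>(l, a, b). of_real (rate l)
      * (z ^ (l * a) / of_nat a * (cnj w ^ (l * b) / of_nat b)) :: complex)"
  have sum_by_ab: "((\<lambda>l. H (l, a, b)) has_sum gfun \<theta> (of_real r * z ^ a * cnj w ^ b) / of_nat (a * b))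
      {1..}" if "(a, b) \<in> {1..} \<times> {1..}" for a b
  proof -
    have "norm z ^ a * norm w ^ b < 1"
      using that z w mult_left_le[of "norm w ^ b" "norm z ^ a"]
      by (simp add: power_less_one_iff power_le_one order.strict_trans1)
    then have "((\<lambda>l. of_real (rate l) * (z ^ a * cnj w ^ b) ^ l / of_nat (a * b))
        has_sum gfun \<theta> (of_real r * (z ^ a * cnj w ^ b)) / of_nat (a * b)) {1..}"
      by (intro has_sum_divide_const has_sum_rate_power) (simp add: norm_mult norm_power)
    moreover have "of_real (rate l) * (z ^ a * cnj w ^ b) ^ l / of_nat (a * b) = H (l, a, b)" for l
      by (simp add: H_def power_mult_distrib power_mult[symmetric] mult.commute)
    ultimately show ?thesis
      by (simp add: mult.assoc)
  qed
  have "((\<lambda>(p, l). H (l, p)) has_sum (\<Sum>l. of_real (rate l) * neglog_pow l z * cnj (neglog_pow l w)))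
      (({1..} \<times> {1..}) \<times> {1..})"
    using has_sum_rate_neglog_pow_triple_series[OF z w] unfolding H_def[symmetric]
    by (subst (asm) has_sum_swap) simp
  then show ?thesis
    by (rule has_sum_SigmaD) (use sum_by_ab in auto)
qed

end

theorem mainTheorem8:
  fixes M :: "'a measure" and \<theta> :: "nat \<Rightarrow> real" and r :: real
    and Y :: "nat \<Rightarrow> 'a \<Rightarrow> nat" and z w :: complex
  assumes "prob_space M"
    and "\<And>k. k \<ge> 1 \<Longrightarrow> \<theta> k > 0"
    and "0 < r"
    and "conv_radius (\<lambda>k. \<theta> k / real k) = ereal r"
    and "prob_space.indep_vars M (\<lambda>_. count_space UNIV) Y {1..}"
    and "\<And>l. l \<ge> 1 \<Longrightarrow>
           distr M (count_space UNIV) (Y l) = measure_pmf (poisson_pmf (r ^ l * \<theta> l / real l))"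
    and "norm z < 1" and "norm w < 1"
  shows "((\<lambda>(a, b). gfun \<theta> (of_real r * z ^ a * cnj w ^ b) / of_nat (a * b))
            has_sum ccov M (fvar Y z) (fvar Y w)) ({1..} \<times> {1..})"
proof -
  interpret poisson_series M \<theta> r Y
    using assms(1-6) by (rule poisson_series.intro)
  show ?thesis
    unfolding ccov_fvar[OF assms(7,8)] by (rule has_sum_gfun_double_series[OF assms(7,8)])
qed

end
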